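(* Let $N\ge 1$ and $q\ge 2$ be integers. Let $\mu_N$ be a probability measure on $(S^1)^N$ which has a smooth density $\rho_N$ with respect to $\alpha^{\otimes N}$, and for $t\in\mathbb{R}$ let $\mu_{N,t}:=R_t\mu_N$ be its image under the joint rotation $R_t$. Then there is an assignment $\mu\mapsto \big(c_{\mu}(\sigma',\sigma'+1_i)\big)_{\sigma'\in\{1,\dots,q\}^N,\, i\in V_N}$ of nonnegative numbers to such measures $\mu$ such that, for every $t\in\mathbb{R}$ and every function $g:\{1,\dots,q\}^N\to\mathbb{R}$, $$\lim_{\varepsilon\downarrow 0}\frac{1}{\varepsilon}\Big(T(\mu_{N,t+\varepsilon})(g)-T(\mu_{N,t})(g)\Big)=T(\mu_{N,t})(Q_{\mu_{N,t}}g),$$ where $T(\mu_{N,t})(g)=\int \mu_N(d\omega)\, g(TR_t\omega)$ and $$Q_{\mu_{N,t}}g(\sigma'):=\sum_{i=1}^N c_{\mu_{N,t}}(\sigma',\sigma'+1_i)\big(g(\sigma'+1_i)-g(\sigma')\big).$$ In particular the rates depend on time only through the measure $\mu_{N,t}$.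
   Context: $S^1$ is identified with $[0,2\pi)$, $\alpha$ denotes Lebesgue measure on $S^1$, $V_N=\{1,\dots,N\}$. For $t\in\mathbb{R}$, $R_t$ rotates a point $s\in S^1$ to $(s+t)\bmod 2\pi$, and acts on $(S^1)^N$ sitewise: $(R_t\omega)_i=R_t\omega_i$. For $k\in\{1,\dots,q\}$ let $S_k=[\tfrac{2\pi}{q}(k-1),\tfrac{2\pi}{q}k)$, and let $T:S^1\to\{1,\dots,q\}$ be $T(s)=k$ iff $s\in S_k$; $T$ acts on configurations sitewise and on measures by image measure. For $\sigma'\in\{1,\dots,q\}^N$, $\sigma'+1_i$ is the configuration with $(\sigma'+1_i)_j=\sigma'_j+\mathbf 1_{i=j}$, where values are taken modulo $q$ in $\{1,\dots,q\}$ (so $q+1$ means $1$). *)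

theory Defs
  imports "HOL-Probability.Probability"
begin

text \<open>Circle S^1 identified with [0, 2 pi); (S^1)^N with index type 'n (V_N = UNIV, N = CARD('n)).\<close>

definition torus :: "(real^'n) set" where
  "torus = {\<omega>. \<forall>i. 0 \<le> \<omega>$i \<and> \<omega>$i < 2*pi}"

definition torus_leb :: "(real^'n) measure" where
  "torus_leb = restrict_space lborel torus"

definition rot_pt :: "real \<Rightarrow> real \<Rightarrow> real" where
  "rot_pt t s = (s + t) - 2*pi * of_int \<lfloor>(s + t) / (2*pi)\<rfloor>"

definition rot :: "real \<Rightarrow> real^'n \<Rightarrow> real^'n" where
  "rot t \<omega> = (\<chi> i. rot_pt t (\<omega>$i))"

definition rot_meas :: "real \<Rightarrow> (real^'n) measure \<Rightarrow> (real^'n) measure" where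
  "rot_meas t \<mu> = distr \<mu> \<mu> (rot t)"

text \<open>T(s) = k iff s in S_k = [2pi(k-1)/q, 2pi k/q).\<close>
definition Tcell :: "nat \<Rightarrow> real \<Rightarrow> nat" where
  "Tcell q s = nat \<lfloor>s * real q / (2*pi)\<rfloor> + 1"

definition Tconf :: "nat \<Rightarrow> real^'n \<Rightarrow> ('n \<Rightarrow> nat)" where
  "Tconf q \<omega> = (\<lambda>i. Tcell q (\<omega>$i))"

text \<open>sigma' + 1_i, values modulo q in {1..q}.\<close>
definition plus1 :: "nat \<Rightarrow> ('n \<Rightarrow> nat) \<Rightarrow> 'n \<Rightarrow> ('n \<Rightarrow> nat)" where
  "plus1 q \<sigma> i = \<sigma>(i := \<sigma> i mod q + 1)"

definition Qgen :: "nat \<Rightarrow> ((real^'n) measure \<Rightarrow> ('n \<Rightarrow> nat) \<Rightarrow> 'n \<Rightarrow> real)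
    \<Rightarrow> (real^'n) measure \<Rightarrow> (('n \<Rightarrow> nat) \<Rightarrow> real) \<Rightarrow> ('n \<Rightarrow> nat) \<Rightarrow> real" where
  "Qgen q c \<mu> g \<sigma> = (\<Sum>i\<in>UNIV. c \<mu> \<sigma> i * (g (plus1 q \<sigma> i) - g \<sigma>))"

definition partial :: "'n \<Rightarrow> (real^'n \<Rightarrow> real) \<Rightarrow> (real^'n \<Rightarrow> real)" where
  "partial i f x = deriv (\<lambda>s. f (x + s *\<^sub>R axis i 1)) 0"

fun has_partials :: "'n list \<Rightarrow> (real^'n \<Rightarrow> real) \<Rightarrow> bool" where
  "has_partials [] f = continuous_on UNIV f"
| "has_partials (i # is) f =
     ((\<forall>x. (\<lambda>s. f (x + s *\<^sub>R axis i 1)) differentiable (at 0)) \<and> has_partials is (partial i f))"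

definition smooth_fun :: "(real^'n \<Rightarrow> real) \<Rightarrow> bool" where
  "smooth_fun f \<longleftrightarrow> (\<forall>is. has_partials is f)"

text \<open>A smooth function on (S^1)^N: a smooth function on R^N, 2 pi-periodic in each coordinate.\<close>
definition smooth_on_torus :: "(real^'n \<Rightarrow> real) \<Rightarrow> bool" where
  "smooth_on_torus f \<longleftrightarrow> smooth_fun f \<and> (\<forall>x i. f (x + (2*pi) *\<^sub>R axis i 1) = f x)"

end

theory Submission
  imports Defs
begin

text \<open>
  The probability that the discretised configuration of \<open>R\<^sub>t \<omega>\<close> equals \<open>\<sigma>\<close> is, by periodicity
  of the density \<open>\<rho>\<close>, the integral of \<open>\<rho>\<close> over the cell of \<open>\<sigma>\<close> translated by \<open>-t\<close> along the
  diagonal. For continuous \<open>\<rho>\<close>, such a translated box gains mass at the right-derivative rate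
  given by the flux of \<open>\<rho>\<close> through its lower faces minus the flux through its upper faces, and by
  periodicity the lower face of the cell of \<open>\<sigma>\<close> in direction \<open>i\<close> is the upper face of the
  cell of \<open>\<sigma> - 1\<^sub>i\<close>. Dividing the outgoing flux by the cell probability gives the jump rate
  \<open>\<sigma> \<rightarrow> \<sigma> + 1\<^sub>i\<close> (on null cells the flux vanishes, as \<open>\<rho> \<ge> 0\<close>), and summation by parts
  over configurations turns the derivative of the expectation of \<open>g\<close> into the generator. The
  cell probabilities at all later times are determined by \<open>R\<^sub>t \<mu>\<^sub>N\<close>, so the rates are functions
  of that measure.
\<close>

section \<open>Rotations of the circle\<close>

lemma rot_pt_eq_frac: "rot_pt t s = 2*pi * frac ((s + t) / (2*pi))"
  by (simp add: rot_pt_def frac_def right_diff_distrib)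

lemma rot_pt_nonneg: "0 \<le> rot_pt t s"
  by (simp add: rot_pt_eq_frac)

lemma rot_pt_less: "rot_pt t s < 2*pi"
  using frac_lt_1[of "(s + t) / (2*pi)"] by (simp add: rot_pt_eq_frac)

lemma rot_pt_eqI:
  assumes "0 \<le> y" "y < 2*pi" "y = s + t - 2*pi * of_int k"
  shows "rot_pt t s = y"
proof -
  have "(s + t) / (2*pi) = of_int k + y / (2*pi)"
    using assms(3) by (simp add: field_simps)
  moreover have "0 \<le> y / (2*pi)" "y / (2*pi) < 1"
    using assms(1,2) by simp_all
  ultimately have "\<lfloor>(s + t) / (2*pi)\<rfloor> = k"
    by (simp add: floor_unique)
  with assms(3) show ?thesis
    by (simp add: rot_pt_def)
qed

lemma rot_pt_add: "rot_pt (t + e) s = rot_pt e (rot_pt t s)"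
  by (rule rot_pt_eqI[OF rot_pt_nonneg rot_pt_less,
        where k = "\<lfloor>(s + t) / (2*pi)\<rfloor> + \<lfloor>(rot_pt t s + e) / (2*pi)\<rfloor>"])
     (simp add: rot_pt_def algebra_simps)

lemma rot_pt_periodic: "rot_pt t (s + 2*pi) = rot_pt t s"
  by (rule rot_pt_eqI[OF rot_pt_nonneg rot_pt_less, where k = "\<lfloor>(s + t) / (2*pi)\<rfloor> + 1"])
     (simp add: rot_pt_def algebra_simps)

lemma rot_pt_eq_add: "0 \<le> s + t \<Longrightarrow> s + t < 2*pi \<Longrightarrow> rot_pt t s = s + t"
  by (rule rot_pt_eqI[where k = 0]) auto

lemma rot_add: "rot (t + e) \<omega> = rot e (rot t \<omega>)"
  by (simp add: rot_def rot_pt_add vec_eq_iff)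

lemma rot_in_torus: "rot t \<omega> \<in> torus"
  by (simp add: rot_def torus_def rot_pt_nonneg rot_pt_less)

lemma rot_periodic: "rot t (x + (2*pi) *\<^sub>R axis j 1) = rot t x"
  by (simp add: rot_def vec_eq_iff axis_def rot_pt_periodic)

section \<open>Periodic functions on the torus\<close>

definition torus_periodic :: "(real^'n \<Rightarrow> 'a) \<Rightarrow> bool" where
  "torus_periodic f \<longleftrightarrow> (\<forall>x j. f (x + (2*pi) *\<^sub>R axis j 1) = f x)"

lemma torus_periodic_shift_nat:
  assumes "torus_periodic f"
  shows "f (x + (2*pi * real n) *\<^sub>R axis j 1) = f x"
proof (induction n)
  case (Suc n)
  have "x + (2*pi * real (Suc n)) *\<^sub>R axis j 1 = (x + (2*pi * real n) *\<^sub>R axis j 1) + (2*pi) *\<^sub>R axis j 1"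
    by (simp add: algebra_simps)
  with assms Suc.IH show ?case
    unfolding torus_periodic_def by metis
qed simp

lemma torus_periodic_shift_int:
  assumes "torus_periodic f"
  shows "f (x + (2*pi * of_int k) *\<^sub>R axis j 1) = f x"
proof (cases "k \<ge> 0")
  case True
  then show ?thesis
    using torus_periodic_shift_nat[OF assms, of x "nat k"] by simp
next
  case False
  let ?y = "x + (2*pi * of_int k) *\<^sub>R axis j 1"
  have "?y + (2*pi * real (nat (-k))) *\<^sub>R axis j 1 = x"
    using False by (simp add: algebra_simps)
  then show ?thesis
    using torus_periodic_shift_nat[OF assms, of ?y "nat (-k)"] by metis
qed

lemma torus_periodic_lattice:
  assumes "torus_periodic f"
  shows "f (x + (\<chi> j. 2*pi * of_int (k j))) = f x"
proof -
  have "f (x + (\<chi> j. if j \<in> J then 2*pi * of_int (k j) else 0)) = f x" for J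
  proof (induction J rule: finite_induct[OF finite])
    case (2 j J)
    have "x + (\<chi> i. if i \<in> insert j J then 2*pi * of_int (k i) else 0)
        = (x + (\<chi> i. if i \<in> J then 2*pi * of_int (k i) else 0)) + (2*pi * of_int (k j)) *\<^sub>R axis j 1"
      using 2(2) by (auto simp: vec_eq_iff axis_def)
    also have "f \<dots> = f (x + (\<chi> i. if i \<in> J then 2*pi * of_int (k i) else 0))"
      by (rule torus_periodic_shift_int[OF assms])
    finally show ?case
      using 2(3) by simp
  qed (simp add: zero_vec_def[symmetric])
  from this[of UNIV] show ?thesis by simp
qed

lemma torus_periodic_rot_0:
  assumes "torus_periodic f"
  shows "f (rot 0 x) = f x"
proof -
  have "rot 0 x = x + (\<chi> j. 2*pi * of_int (- \<lfloor>x$j / (2*pi)\<rfloor>))"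
    by (simp add: rot_def rot_pt_def vec_eq_iff)
  then show ?thesis
    using torus_periodic_lattice[OF assms, of x "\<lambda>j. - \<lfloor>x$j / (2*pi)\<rfloor>"] by simp
qed

lemma torus_periodic_nonneg:
  fixes f :: "real^'n \<Rightarrow> real"
  assumes "torus_periodic f" "\<forall>\<omega>\<in>torus. f \<omega> \<ge> 0"
  shows "f x \<ge> 0"
  using assms(2) torus_periodic_rot_0[OF assms(1), of x] rot_in_torus[of 0 x] by metis

section \<open>Cells and configurations\<close>

lemma Tcell_eq_iff:
  assumes "q > 0" "0 \<le> s" "k \<ge> 1"
  shows "Tcell q s = k \<longleftrightarrow> 2*pi*(real k - 1)/q \<le> s \<and> s < 2*pi*real k/q"
proof -
  define y where "y = s * real q / (2*pi)"
  have "Tcell q s = k \<longleftrightarrow> \<lfloor>y\<rfloor> = int k - 1"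
    using assms by (auto simp: Tcell_def y_def)
  also have "\<dots> \<longleftrightarrow> real k - 1 \<le> y \<and> y < real k"
    by (simp add: floor_eq_iff)
  also have "\<dots> \<longleftrightarrow> 2*pi*(real k - 1)/q \<le> s \<and> s < 2*pi*real k/q"
    using assms(1) by (simp add: y_def field_simps)
  finally show ?thesis .
qed

lemma Tcell_range:
  assumes "q > 0" "0 \<le> s" "s < 2*pi"
  shows "Tcell q s \<in> {1..q}"
proof -
  define y where "y = s * real q / (2*pi)"
  have "0 \<le> y" "y < q"
    using assms by (simp_all add: y_def field_simps)
  then have "nat \<lfloor>y\<rfloor> < q"
    by (simp add: nat_less_iff floor_less_iff)
  then show ?thesis
    by (simp add: Tcell_def y_def)
qed

definition configs :: "nat \<Rightarrow> ('n \<Rightarrow> nat) set" where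
  "configs q = {\<sigma>. \<forall>i. \<sigma> i \<in> {1..q}}"

lemma finite_configs: "finite (configs q :: ('n::finite \<Rightarrow> nat) set)"
proof -
  have "configs q = PiE (UNIV :: 'n set) (\<lambda>_. {1..q})"
    by (auto simp: configs_def PiE_def extensional_def)
  then show ?thesis
    by (simp add: finite_PiE)
qed

lemma Tconf_rot_in_configs: "q > 0 \<Longrightarrow> Tconf q (rot t \<omega>) \<in> configs q"
  using Tcell_range rot_pt_nonneg rot_pt_less by (auto simp: configs_def Tconf_def rot_def)

definition cell_lo :: "nat \<Rightarrow> ('n \<Rightarrow> nat) \<Rightarrow> real^'n" where
  "cell_lo q \<sigma> = (\<chi> j. 2*pi*(real (\<sigma> j) - 1)/q)"

definition cell_hi :: "nat \<Rightarrow> ('n \<Rightarrow> nat) \<Rightarrow> real^'n" where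
  "cell_hi q \<sigma> = (\<chi> j. 2*pi*real (\<sigma> j)/q)"

lemma cell_lo_hi:
  assumes "q > 0" "\<sigma> \<in> configs q"
  shows "0 \<le> cell_lo q \<sigma> $ j" "cell_hi q \<sigma> $ j \<le> 2*pi" "cell_lo q \<sigma> $ j < cell_hi q \<sigma> $ j"
  using assms by (auto simp: configs_def cell_lo_def cell_hi_def field_simps)

definition minus1 :: "nat \<Rightarrow> ('n \<Rightarrow> nat) \<Rightarrow> 'n \<Rightarrow> ('n \<Rightarrow> nat)" where
  "minus1 q \<sigma> i = \<sigma>(i := if \<sigma> i = 1 then q else \<sigma> i - 1)"

lemma plus1_in_configs: "q > 0 \<Longrightarrow> \<sigma> \<in> configs q \<Longrightarrow> plus1 q \<sigma> i \<in> configs q"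
  by (auto simp: configs_def plus1_def Suc_le_eq)

lemma minus1_in_configs:
  assumes "\<sigma> \<in> configs q"
  shows "minus1 q \<sigma> i \<in> configs q"
proof -
  from assms have "1 \<le> \<sigma> i" "\<sigma> i \<le> q"
    by (auto simp: configs_def)
  then have "(if \<sigma> i = 1 then q else \<sigma> i - 1) \<in> {1..q}"
    by auto
  moreover have "\<sigma>(i := v) \<in> configs q" if "v \<in> {1..q}" for v
    using assms that by (simp add: configs_def)
  ultimately show ?thesis
    unfolding minus1_def by blast
qed

lemma minus1_plus1:
  assumes "\<sigma> \<in> configs q"
  shows "minus1 q (plus1 q \<sigma> i) i = \<sigma>"
proof -
  from assms have "1 \<le> \<sigma> i" "\<sigma> i \<le> q"
    by (auto simp: configs_def)
  then show ?thesis
    by (cases "\<sigma> i = q") (auto simp: minus1_def plus1_def fun_eq_iff)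
qed

lemma plus1_minus1:
  assumes "\<sigma> \<in> configs q"
  shows "plus1 q (minus1 q \<sigma> i) i = \<sigma>"
proof -
  from assms have "1 \<le> \<sigma> i" "\<sigma> i \<le> q"
    by (auto simp: configs_def)
  then show ?thesis
    by (cases "\<sigma> i = 1") (auto simp: minus1_def plus1_def fun_eq_iff)
qed

lemma sum_configs_plus1:
  assumes "q > 0"
  shows "(\<Sum>\<sigma>\<in>configs q. f \<sigma> * g (plus1 q \<sigma> i)) = (\<Sum>\<sigma>\<in>configs q. f (minus1 q \<sigma> i) * (g \<sigma> :: real))"
  by (rule sum.reindex_bij_witness[where j = "\<lambda>\<sigma>. plus1 q \<sigma> i" and i = "\<lambda>\<sigma>. minus1 q \<sigma> i"])
     (auto simp: assms minus1_plus1 plus1_minus1 plus1_in_configs minus1_in_configs)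

section \<open>Cell probabilities as box integrals\<close>

definition box_co :: "real^'n \<Rightarrow> real^'n \<Rightarrow> (real^'n) set" where
  "box_co c d = {x. \<forall>j. c$j \<le> x$j \<and> x$j < d$j}"

lemma torus_eq_box_co: "torus = box_co 0 (vec (2*pi))"
  by (simp add: torus_def box_co_def)

lemma box_co_borel [measurable]: "box_co c d \<in> sets borel"
  unfolding box_co_def by measurable

lemma torus_borel [measurable]: "torus \<in> sets borel"
  unfolding torus_eq_box_co by (rule box_co_borel)

lemma rot_pt_measurable [measurable]: "rot_pt t \<in> borel_measurable borel"
  unfolding rot_pt_def by measurable

lemma rot_measurable [measurable]: "rot t \<in> borel_measurable (borel :: (real^'n) measure)"
proof -
  have "(\<lambda>x. rot t x \<bullet> axis j 1) \<in> borel_measurable borel" for j :: 'n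
    by (simp add: rot_def inner_axis)
  then show ?thesis
    by (subst borel_measurable_euclidean_space) (auto simp: Basis_vec_def)
qed

lemma Tconf_rot_set_borel [measurable]:
  assumes "q > 0"
  shows "{x::real^'n. Tconf q (rot t x) = \<sigma>} \<in> sets borel"
proof -
  have "Tcell q (rot_pt t s) = k \<longleftrightarrow> k \<ge> 1 \<and> 2*pi*(real k - 1)/q \<le> rot_pt t s \<and> rot_pt t s < 2*pi*real k/q"
    for s k
    using Tcell_eq_iff[OF assms rot_pt_nonneg, of k t s] by (auto simp: Tcell_def)
  then have "{x::real^'n. Tconf q (rot t x) = \<sigma>}
      = {x. \<forall>j. \<sigma> j \<ge> 1 \<and> 2*pi*(real (\<sigma> j) - 1)/q \<le> rot_pt t (x$j) \<and> rot_pt t (x$j) < 2*pi*real (\<sigma> j)/q}"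
    by (auto simp: Tconf_def rot_def fun_eq_iff)
  also have "\<dots> \<in> sets borel"
    by measurable
  finally show ?thesis .
qed

lemma nn_integral_lborel_translate:
  fixes f :: "'a::euclidean_space \<Rightarrow> ennreal"
  assumes [measurable]: "f \<in> borel_measurable borel"
  shows "(\<integral>\<^sup>+x. f (v + x) \<partial>lborel) = (\<integral>\<^sup>+x. f x \<partial>lborel)"
proof -
  have "(\<integral>\<^sup>+x. f x \<partial>lborel) = (\<integral>\<^sup>+x. f x \<partial>distr lborel borel ((+) v))"
    by (simp add: lborel_distr_plus)
  also have "\<dots> = (\<integral>\<^sup>+x. f (v + x) \<partial>lborel)"
    by (rule nn_integral_distr) auto
  finally show ?thesis by simp
qed

definition slab :: "real^'n \<Rightarrow> 'n \<Rightarrow> real \<Rightarrow> real \<Rightarrow> (real^'n) set" where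
  "slab c j \<alpha> \<beta> = {y. \<alpha> \<le> y$j \<and> y$j < \<beta> \<and> (\<forall>i. i \<noteq> j \<longrightarrow> c$i \<le> y$i \<and> y$i < c$i + 2*pi)}"

lemma slab_borel [measurable]: "slab c j \<alpha> \<beta> \<in> sets borel"
  unfolding slab_def by measurable

lemma nn_integral_slab_split:
  assumes [measurable]: "h \<in> borel_measurable borel" and "\<alpha> \<le> \<beta>" "\<beta> \<le> \<gamma>"
  shows "(\<integral>\<^sup>+x. h x * indicator (slab c j \<alpha> \<gamma>) x \<partial>lborel)
       = (\<integral>\<^sup>+x. h x * indicator (slab c j \<alpha> \<beta>) x \<partial>lborel) + (\<integral>\<^sup>+x. h x * indicator (slab c j \<beta> \<gamma>) x \<partial>lborel)"
proof -
  have "h x * indicator (slab c j \<alpha> \<gamma>) x = h x * indicator (slab c j \<alpha> \<beta>) x + h x * indicator (slab c j \<beta> \<gamma>) x"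
    for x
    using assms(2,3) by (auto simp: slab_def indicator_def)
  then show ?thesis
    by (simp add: nn_integral_add)
qed

lemma nn_integral_slab_shift:
  assumes [measurable]: "h \<in> borel_measurable borel" and "torus_periodic h"
  shows "(\<integral>\<^sup>+x. h x * indicator (slab c j (\<alpha> + 2*pi * of_int k) (\<beta> + 2*pi * of_int k)) x \<partial>lborel)
       = (\<integral>\<^sup>+x. h x * indicator (slab c j \<alpha> \<beta>) x \<partial>lborel)"
proof -
  let ?v = "(2*pi * of_int k) *\<^sub>R axis j (1::real)"
  let ?S = "slab c j (\<alpha> + 2*pi * of_int k) (\<beta> + 2*pi * of_int k)"
  have "h (?v + x) * indicator ?S (?v + x) = h x * indicator (slab c j \<alpha> \<beta>) x" for x
  proof -
    have "h (?v + x) = h x"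
      using torus_periodic_shift_int[OF assms(2), of x k j] by (simp add: add.commute)
    moreover have "?v + x \<in> ?S \<longleftrightarrow> x \<in> slab c j \<alpha> \<beta>"
      by (auto simp: slab_def axis_def)
    ultimately show ?thesis
      by (simp add: indicator_def)
  qed
  then show ?thesis
    using nn_integral_lborel_translate[of "\<lambda>x. h x * indicator ?S x" ?v] by simp
qed

lemma nn_integral_slab_period:
  assumes [measurable]: "h \<in> borel_measurable borel" and "torus_periodic h"
  shows "(\<integral>\<^sup>+x. h x * indicator (slab c j \<alpha> (\<alpha> + 2*pi)) x \<partial>lborel)
       = (\<integral>\<^sup>+x. h x * indicator (slab c j 0 (2*pi)) x \<partial>lborel)"
proof -
  let ?I = "\<lambda>a b. \<integral>\<^sup>+x. h x * indicator (slab c j a b) x \<partial>lborel"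
  define k where "k = \<lfloor>\<alpha> / (2*pi)\<rfloor>"
  define r where "r = 2*pi * frac (\<alpha> / (2*pi))"
  have r: "0 \<le> r" "r < 2*pi"
    using frac_lt_1[of "\<alpha> / (2*pi)"] by (simp_all add: r_def)
  have \<alpha>: "\<alpha> = r + 2*pi * of_int k"
    by (simp add: r_def k_def frac_def algebra_simps)
  have "?I \<alpha> (\<alpha> + 2*pi) = ?I r (r + 2*pi)"
    using nn_integral_slab_shift[OF assms, of c j r k "r + 2*pi"] by (simp add: \<alpha> algebra_simps)
  also have "\<dots> = ?I r (2*pi) + ?I (2*pi) (r + 2*pi)"
    using r by (intro nn_integral_slab_split) auto
  also have "?I (2*pi) (r + 2*pi) = ?I 0 r"
    using nn_integral_slab_shift[OF assms, of c j 0 1 r] by (simp add: add.commute)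
  also have "?I r (2*pi) + ?I 0 r = ?I 0 (2*pi)"
    using r by (subst nn_integral_slab_split[of h 0 r "2*pi"]) (auto simp: add.commute)
  finally show ?thesis .
qed

lemma nn_integral_box_co_period:
  assumes [measurable]: "h \<in> borel_measurable borel" and "torus_periodic h"
  shows "(\<integral>\<^sup>+x. h x * indicator (box_co c (c + vec (2*pi))) x \<partial>lborel) = (\<integral>\<^sup>+x. h x * indicator torus x \<partial>lborel)"
proof -
  let ?I = "\<lambda>c. \<integral>\<^sup>+x. h x * indicator (box_co c (c + vec (2*pi))) x \<partial>lborel"
  have "?I c = ?I (\<chi> i. if i \<in> J then 0 else c$i)" for J
  proof (induction J rule: finite_induct[OF finite])
    case (2 j J)
    let ?c = "\<chi> i. if i \<in> J then 0 else c$i"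
    have "box_co ?c (?c + vec (2*pi)) = slab ?c j (?c$j) (?c$j + 2*pi)"
      by (auto simp: box_co_def slab_def)
    moreover have "slab ?c j 0 (2*pi) = box_co (\<chi> i. if i \<in> insert j J then 0 else c$i)
        ((\<chi> i. if i \<in> insert j J then 0 else c$i) + vec (2*pi))"
      by (auto simp: box_co_def slab_def)
    ultimately show ?case
      using 2(3) nn_integral_slab_period[OF assms, of ?c j "?c$j"] by simp
  qed (simp add: vec_nth_inverse)
  from this[of UNIV] show ?thesis
    by (simp add: torus_eq_box_co zero_vec_def[symmetric])
qed

lemma nn_integral_box_co_eq_integral:
  fixes \<rho> :: "real^'n \<Rightarrow> real"
  assumes cont: "continuous_on UNIV \<rho>" and nonneg: "\<And>x. 0 \<le> \<rho> x"
  shows "(\<integral>\<^sup>+x. ennreal (\<rho> x) * indicator (box_co c d) x \<partial>lborel) = ennreal (integral (cbox c d) \<rho>)"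
proof -
  have int: "(\<rho> has_integral integral (cbox c d) \<rho>) (cbox c d)"
    by (intro integrable_integral integrable_continuous continuous_on_subset[OF cont]) auto
  have "box c d \<subseteq> box_co c d" "box_co c d \<subseteq> cbox c d"
    by (auto simp: box_co_def mem_box_cart less_imp_le)
  then have "negligible {x \<in> box_co c d - cbox c d. \<rho> x \<noteq> 0}" "negligible {x \<in> cbox c d - box_co c d. \<rho> x \<noteq> 0}"
    by (auto intro: negligible_subset[OF negligible_frontier_interval])
  with int have "(\<rho> has_integral integral (cbox c d) \<rho>) (box_co c d)"
    using has_integral_spike_set_eq by blast
  then have "((\<lambda>x. if x \<in> box_co c d then \<rho> x else 0) has_integral integral (cbox c d) \<rho>) UNIV"
    by (simp add: has_integral_restrict_UNIV)
  then have "(\<integral>\<^sup>+x. ennreal (if x \<in> box_co c d then \<rho> x else 0) \<partial>lborel) = integral (cbox c d) \<rho>"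
    using borel_measurable_continuous_onI[OF cont] by (intro nn_integral_has_integral_lborel) (auto simp: nonneg)
  moreover have "ennreal (if x \<in> box_co c d then \<rho> x else 0) = ennreal (\<rho> x) * indicator (box_co c d) x" for x
    by (simp add: indicator_def)
  ultimately show ?thesis
    by simp
qed

lemma box_co_Tconf_rot:
  assumes "q > 0" "\<sigma> \<in> configs q"
  shows "box_co (- vec t) (- vec t + vec (2*pi)) \<inter> {x. Tconf q (rot t x) = \<sigma>}
       = box_co (cell_lo q \<sigma> - vec t) (cell_hi q \<sigma> - vec t)"
proof -
  have "- t \<le> s \<and> s < 2*pi - t \<and> Tcell q (rot_pt t s) = \<sigma> j
      \<longleftrightarrow> cell_lo q \<sigma> $ j - t \<le> s \<and> s < cell_hi q \<sigma> $ j - t" for s j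
  proof (cases "- t \<le> s \<and> s < 2*pi - t")
    case True
    then have "rot_pt t s = s + t"
      by (intro rot_pt_eq_add) auto
    moreover have "1 \<le> \<sigma> j"
      using assms(2) by (simp add: configs_def)
    ultimately show ?thesis
      using True Tcell_eq_iff[OF assms(1), of "s + t" "\<sigma> j"] by (auto simp: cell_lo_def cell_hi_def)
  next
    case False
    then show ?thesis
      using cell_lo_hi[OF assms, of j] by auto
  qed
  then show ?thesis
    by (auto simp: box_co_def Tconf_def rot_def fun_eq_iff)
qed

lemma emeasure_rotated_cell:
  fixes \<rho> :: "real^'n \<Rightarrow> real"
  assumes "q > 0" "\<sigma> \<in> configs q"
    and cont: "continuous_on UNIV \<rho>" and "torus_periodic \<rho>" and nonneg: "\<And>x. 0 \<le> \<rho> x"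
  shows "emeasure (density torus_leb (\<lambda>\<omega>. ennreal (\<rho> \<omega>))) {\<omega> \<in> torus. Tconf q (rot t \<omega>) = \<sigma>}
       = ennreal (integral (cbox (cell_lo q \<sigma> - vec t) (cell_hi q \<sigma> - vec t)) \<rho>)"
proof -
  have [measurable]: "\<rho> \<in> borel_measurable borel"
    by (rule borel_measurable_continuous_onI[OF cont])
  define C where "C = {x. Tconf q (rot t x) = \<sigma>}"
  have [measurable]: "C \<in> sets borel"
    unfolding C_def using assms(1) by measurable
  have "{\<omega> \<in> torus. Tconf q (rot t \<omega>) = \<sigma>} = torus \<inter> C"
    by (auto simp: C_def)
  moreover have "torus \<inter> C \<in> sets torus_leb"
    by (simp add: torus_leb_def sets_restrict_space_iff)
  ultimately have "emeasure (density torus_leb (\<lambda>\<omega>. ennreal (\<rho> \<omega>))) {\<omega> \<in> torus. Tconf q (rot t \<omega>) = \<sigma>}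
      = (\<integral>\<^sup>+x. ennreal (\<rho> x) * indicator (torus \<inter> C) x \<partial>torus_leb)"
    by (simp add: emeasure_density torus_leb_def measurable_restrict_space1)
  also have "\<dots> = (\<integral>\<^sup>+x. (ennreal (\<rho> x) * indicator C x) * indicator torus x \<partial>lborel)"
    by (simp add: torus_leb_def nn_integral_restrict_space) (auto intro!: nn_integral_cong simp: indicator_def)
  \<comment> \<open>On the period box with corner \<open>-t\<close> the rotation \<open>R\<^sub>t\<close> is a plain translation.\<close>
  also have "\<dots> = (\<integral>\<^sup>+x. (ennreal (\<rho> x) * indicator C x) * indicator (box_co (- vec t) (- vec t + vec (2*pi))) x \<partial>lborel)"
  proof (rule nn_integral_box_co_period[symmetric])
    show "torus_periodic (\<lambda>x. ennreal (\<rho> x) * indicator C x)"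
      using assms(4) by (simp add: torus_periodic_def C_def indicator_def rot_periodic)
  qed measurable
  also have "\<dots> = (\<integral>\<^sup>+x. ennreal (\<rho> x) * indicator (box_co (cell_lo q \<sigma> - vec t) (cell_hi q \<sigma> - vec t)) x \<partial>lborel)"
    using box_co_Tconf_rot[OF assms(1,2), of t]
    by (simp add: C_def indicator_inter_arith[symmetric] ac_simps Int_commute)
  also have "\<dots> = ennreal (integral (cbox (cell_lo q \<sigma> - vec t) (cell_hi q \<sigma> - vec t)) \<rho>)"
    by (rule nn_integral_box_co_eq_integral[OF cont nonneg])
  finally show ?thesis .
qed

section \<open>Translating a box along the diagonal\<close>

lemma integral_cbox_rescale:
  fixes \<rho> :: "real^'n \<Rightarrow> real"
  assumes cont: "continuous_on UNIV \<rho>" and pos: "\<And>k. 0 < m$k"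
  shows "integral (cbox c (c + m)) \<rho> = (\<Prod>k\<in>UNIV. m$k) * integral (cbox 0 1) (\<lambda>y. \<rho> (c + (\<chi> k. m$k * y$k)))"
proof -
  define f where "f z = \<rho> (c + z)" for z
  have m_nz: "m$k \<noteq> 0" for k
    using pos[of k] by simp
  have "integral (cbox 0 m) (\<rho> \<circ> (+) c) = integral (cbox (0 + c) (m + c)) \<rho>"
    by (rule integral_shift_cbox_plus)
  then have shift: "integral (cbox 0 m) f = integral (cbox c (c + m)) \<rho>"
    by (simp add: f_def[abs_def] o_def add.commute)
  have "continuous_on UNIV f"
    unfolding f_def by (intro continuous_on_compose2[OF cont] continuous_intros) auto
  then have "(f has_integral integral (cbox 0 m) f) (cbox 0 m)"
    by (meson integrable_continuous integrable_integral continuous_on_subset subset_UNIV)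
  from has_integral_stretch_cart[OF this m_nz]
  have stretch: "((\<lambda>x. f (\<chi> k. m$k * x$k)) has_integral integral (cbox 0 m) f /\<^sub>R \<bar>\<Prod>k\<in>UNIV. m$k\<bar>)
      ((\<lambda>x. \<chi> k. x$k / m$k) ` cbox 0 m)" .
  have "(\<lambda>x. \<chi> k. x$k / m$k) ` cbox 0 m = (\<lambda>x. \<chi> k. (1 / m$k) * x$k) ` cbox 0 m"
    by simp
  also have "\<dots> = cbox 0 1"
  proof -
    have "0 \<in> cbox 0 m"
      using pos by (simp add: mem_box_cart less_imp_le)
    moreover have "(\<chi> k. min ((1 / m$k) * (0::real^'n)$k) ((1 / m$k) * m$k)) = 0"
      "(\<chi> k. max ((1 / m$k) * (0::real^'n)$k) ((1 / m$k) * m$k)) = 1"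
      using m_nz by (simp_all add: vec_eq_iff)
    ultimately show ?thesis
      using image_stretch_interval_cart[of "\<lambda>k. 1 / m$k" 0 m] by auto
  qed
  finally have "integral (cbox 0 1) (\<lambda>x. f (\<chi> k. m$k * x$k)) = integral (cbox 0 m) f / (\<Prod>k\<in>UNIV. m$k)"
    using integral_unique[OF stretch] pos by (simp add: prod_pos abs_of_pos divide_inverse_commute)
  moreover have "(\<Prod>k\<in>UNIV. m$k) \<noteq> 0"
    by (simp add: m_nz)
  ultimately show ?thesis
    by (simp add: shift f_def)
qed

lemma tendsto_integral_cbox_average:
  fixes \<rho> :: "real^'n \<Rightarrow> real" and c m :: "'a \<Rightarrow> real^'n"
  assumes cont: "continuous_on UNIV \<rho>"
    and c: "(c \<longlongrightarrow> c0) F" and m: "(m \<longlongrightarrow> m0) F"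
    and pos: "eventually (\<lambda>x. \<forall>k. 0 < m x $ k) F"
  shows "((\<lambda>x. integral (cbox (c x) (c x + m x)) \<rho> / (\<Prod>k\<in>UNIV. m x $ k))
          \<longlongrightarrow> integral (cbox 0 1) (\<lambda>y. \<rho> (c0 + (\<chi> k. m0$k * y$k)))) F"
proof -
  define \<Phi> where "\<Phi> p = integral (cbox 0 1) (\<lambda>y. \<rho> (fst p + (\<chi> k. snd p $ k * y$k)))"
    for p :: "(real^'n) \<times> (real^'n)"
  have "continuous_on UNIV \<Phi>"
    unfolding \<Phi>_def
    by (rule integral_continuous_on_param, unfold case_prod_beta)
       (intro continuous_on_compose2[OF cont] continuous_intros; simp)
  then have "((\<lambda>x. \<Phi> (c x, m x)) \<longlongrightarrow> \<Phi> (c0, m0)) F"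
    by (intro isCont_tendsto_compose[of _ \<Phi>] tendsto_Pair c m) (simp add: continuous_on_eq_continuous_at)
  moreover have "eventually (\<lambda>x. \<Phi> (c x, m x) = integral (cbox (c x) (c x + m x)) \<rho> / (\<Prod>k\<in>UNIV. m x $ k)) F"
    using pos
  proof eventually_elim
    case (elim x)
    then have "(\<Prod>k\<in>UNIV. m x $ k) \<noteq> 0"
      by (metis finite less_irrefl prod_zero_iff)
    then show ?case
      using integral_cbox_rescale[OF cont, of "m x" "c x"] elim by (simp add: \<Phi>_def)
  qed
  ultimately show ?thesis
    unfolding \<Phi>_def fst_conv snd_conv by (rule Lim_transform_eventually)
qed

text \<open>Splitting both boxes at a hyperplane orthogonal to \<open>e\<^sub>i\<close> leaves a common middle part and
  two slabs of width \<open>\<epsilon>\<close>.\<close>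

lemma integral_cbox_shift_coord_diff:
  fixes \<rho> :: "real^'n \<Rightarrow> real" and a b s :: "real^'n"
  assumes cont: "continuous_on UNIV \<rho>" and "0 < \<epsilon>" "\<epsilon> < b$i - a$i"
  defines "m \<equiv> \<chi> k. if k = i then \<epsilon> else b$k - a$k"
    and "cL \<equiv> a - s - \<epsilon> *\<^sub>R axis i 1"
    and "cU \<equiv> \<chi> k. if k = i then b$i - s$i - \<epsilon> else a$k - s$k"
  shows "integral (cbox (a - (s + \<epsilon> *\<^sub>R axis i 1)) (b - (s + \<epsilon> *\<^sub>R axis i 1))) \<rho> - integral (cbox (a - s) (b - s)) \<rho>
      = integral (cbox cL (cL + m)) \<rho> - integral (cbox cU (cU + m)) \<rho>"
proof -
  have int: "\<rho> integrable_on cbox x y" for x y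
    by (meson cont integrable_continuous continuous_on_subset subset_UNIV)
  have basis: "axis i (1::real) \<in> Basis"
    by (auto simp: Basis_vec_def)
  define lo where "lo = a - (s + \<epsilon> *\<^sub>R axis i 1)"
  define hi where "hi = b - (s + \<epsilon> *\<^sub>R axis i 1)"
  define c1 where "c1 = a$i - s$i"
  define c2 where "c2 = b$i - s$i - \<epsilon>"
  define mid where "mid = cbox (a - s) hi"
  have split1: "integral (cbox lo hi) \<rho>
      = integral (cbox lo hi \<inter> {x. x$i \<le> c1}) \<rho> + integral (cbox lo hi \<inter> {x. x$i \<ge> c1}) \<rho>"
    using integral_split[OF int basis, of lo hi c1] by (simp add: inner_axis)
  have split2: "integral (cbox (a - s) (b - s)) \<rho>
      = integral (cbox (a - s) (b - s) \<inter> {x. x$i \<le> c2}) \<rho> + integral (cbox (a - s) (b - s) \<inter> {x. x$i \<ge> c2}) \<rho>"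
    using integral_split[OF int basis, of "a - s" "b - s" c2] by (simp add: inner_axis)
  have "cbox lo hi \<inter> {x. x$i \<le> c1} = cbox lo (\<chi> k. if k = i then min (hi$i) c1 else hi$k)"
    using interval_split_cart(1)[of lo hi i c1] by (simp add: interval_cbox_cart)
  also have "\<dots> = cbox cL (cL + m)"
    using assms(3) by (intro arg_cong2[where f = cbox])
      (auto simp: vec_eq_iff lo_def hi_def cL_def m_def c1_def axis_def min_def)
  finally have L: "cbox lo hi \<inter> {x. x$i \<le> c1} = cbox cL (cL + m)" .
  have "cbox lo hi \<inter> {x. x$i \<ge> c1} = cbox (\<chi> k. if k = i then max (lo$i) c1 else lo$k) hi"
    using interval_split_cart(2)[where a = lo and b = hi and k = i and c = c1] by (simp add: interval_cbox_cart)
  also have "\<dots> = mid"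
    using assms(2) unfolding mid_def by (intro arg_cong2[where f = cbox])
      (auto simp: vec_eq_iff lo_def c1_def axis_def max_def)
  finally have M1: "cbox lo hi \<inter> {x. x$i \<ge> c1} = mid" .
  have "cbox (a - s) (b - s) \<inter> {x. x$i \<le> c2} = cbox (a - s) (\<chi> k. if k = i then min ((b - s)$i) c2 else (b - s)$k)"
    using interval_split_cart(1)[of "a - s" "b - s" i c2] by (simp add: interval_cbox_cart)
  also have "\<dots> = mid"
    using assms(2) unfolding mid_def by (intro arg_cong2[where f = cbox])
      (auto simp: vec_eq_iff hi_def c2_def axis_def min_def)
  finally have M2: "cbox (a - s) (b - s) \<inter> {x. x$i \<le> c2} = mid" .
  have "cbox (a - s) (b - s) \<inter> {x. x$i \<ge> c2} = cbox (\<chi> k. if k = i then max ((a - s)$i) c2 else (a - s)$k) (b - s)"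
    using interval_split_cart(2)[where a = "a - s" and b = "b - s" and k = i and c = c2] by (simp add: interval_cbox_cart)
  also have "\<dots> = cbox cU (cU + m)"
    using assms(3) by (intro arg_cong2[where f = cbox])
      (auto simp: vec_eq_iff cU_def m_def c2_def max_def)
  finally have U: "cbox (a - s) (b - s) \<inter> {x. x$i \<ge> c2} = cbox cU (cU + m)" .
  show ?thesis
    using split1 split2 unfolding L M1 M2 U by (simp add: lo_def hi_def)
qed

definition face_area :: "real^'n \<Rightarrow> real^'n \<Rightarrow> 'n \<Rightarrow> real" where
  "face_area a b i = (\<Prod>k\<in>UNIV-{i}. b$k - a$k)"

definition face_average :: "(real^'n \<Rightarrow> real) \<Rightarrow> real^'n \<Rightarrow> real^'n \<Rightarrow> 'n \<Rightarrow> real^'n \<Rightarrow> real" where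
  "face_average \<rho> a b i c = integral (cbox 0 1) (\<lambda>y. \<rho> (c + (\<chi> k. (if k = i then 0 else b$k - a$k) * y$k)))"

lemma face_area_pos: "(\<And>k. a$k < b$k) \<Longrightarrow> face_area a b i > 0"
  unfolding face_area_def by (intro prod_pos) simp

lemma face_average_nonneg: "continuous_on UNIV \<rho> \<Longrightarrow> (\<And>x. 0 \<le> \<rho> x) \<Longrightarrow> face_average \<rho> a b i c \<ge> 0"
  unfolding face_average_def
  by (rule integral_nonneg[OF integrable_continuous])
     (auto intro!: continuous_on_compose2[of UNIV \<rho>] continuous_intros)

lemma face_average_periodic:
  assumes "torus_periodic \<rho>"
  shows "face_average \<rho> a b i (c + (2*pi * of_int n) *\<^sub>R axis j 1) = face_average \<rho> a b i c"
proof -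
  have "\<rho> (c + (2*pi * of_int n) *\<^sub>R axis j 1 + y) = \<rho> (c + y)" for y
    using torus_periodic_shift_int[OF assms, of "c + y" n j] by (simp add: algebra_simps)
  then show ?thesis
    by (simp add: face_average_def)
qed

lemma face_average_upper_eq_0:
  fixes \<rho> :: "real^'n \<Rightarrow> real"
  assumes cont: "continuous_on UNIV \<rho>" and nonneg: "\<And>x. 0 \<le> \<rho> x" and ab: "\<And>k. a$k < b$k"
    and zero: "integral (cbox a b) \<rho> = 0"
  shows "face_average \<rho> a b i (a + (b$i - a$i) *\<^sub>R axis i 1) = 0"
proof -
  have cont_ab: "continuous_on (cbox a b) \<rho>"
    using cont by (rule continuous_on_subset) simp
  have "(\<rho> has_integral 0) (cbox a b)"
    using integrable_integral[OF integrable_continuous[OF cont_ab]] unfolding zero .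
  moreover have "(1/2) *\<^sub>R (a + b) \<in> box a b"
    using ab by (simp add: mem_box_cart field_simps)
  then have "box a b \<noteq> {}"
    by blast
  ultimately have vanish: "\<rho> x = 0" if "x \<in> cbox a b" for x
    by (rule has_integral_0_cbox_imp_0[OF cont_ab nonneg _ _ that])
  have "a + (b$i - a$i) *\<^sub>R axis i 1 + (\<chi> k. (if k = i then 0 else b$k - a$k) * y$k) \<in> cbox a b"
    if "y \<in> cbox 0 1" for y
    unfolding mem_box_cart
  proof
    fix k
    have "0 \<le> y$k" "y$k \<le> 1"
      using that by (auto simp: mem_box_cart)
    moreover have "(b$k - a$k) * y$k \<le> b$k - a$k"
      using mult_left_mono[of "y$k" 1 "b$k - a$k"] ab[of k] \<open>y$k \<le> 1\<close> by simp
    moreover have "0 \<le> (b$k - a$k) * y$k"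
      using ab[of k] \<open>0 \<le> y$k\<close> by simp
    ultimately have "a$k \<le> a$k + (b$k - a$k) * y$k" "a$k + (b$k - a$k) * y$k \<le> b$k"
      by linarith+
    then show "a$k \<le> (a + (b$i - a$i) *\<^sub>R axis i 1 + (\<chi> k. (if k = i then 0 else b$k - a$k) * y$k))$k \<and>
        (a + (b$i - a$i) *\<^sub>R axis i 1 + (\<chi> k. (if k = i then 0 else b$k - a$k) * y$k))$k \<le> b$k"
      using ab[of k] by (auto simp: axis_def)
  qed
  then have "face_average \<rho> a b i (a + (b$i - a$i) *\<^sub>R axis i 1) = integral (cbox 0 1) (\<lambda>y::real^'n. 0::real)"
    unfolding face_average_def by (intro integral_cong vanish)
  then show ?thesis
    by simp
qed

lemma tendsto_thin_box_average:
  fixes \<rho> :: "real^'n \<Rightarrow> real" and c :: "real \<Rightarrow> real^'n"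
  assumes cont: "continuous_on UNIV \<rho>" and ab: "\<And>k. a$k < b$k" and c: "(c \<longlongrightarrow> c0) (at_right 0)"
  shows "((\<lambda>\<epsilon>. integral (cbox (c \<epsilon>) (c \<epsilon> + (\<chi> k. if k = i then \<epsilon> else b$k - a$k))) \<rho> / (\<epsilon> * face_area a b i))
     \<longlongrightarrow> face_average \<rho> a b i c0) (at_right 0)"
proof -
  define m where "m \<epsilon> = (\<chi> k. if k = i then \<epsilon> else b$k - a$k)" for \<epsilon>
  have vol: "(\<Prod>k\<in>UNIV. m \<epsilon> $ k) = \<epsilon> * face_area a b i" for \<epsilon>
  proof -
    have "(\<Prod>k\<in>UNIV. m \<epsilon> $ k) = m \<epsilon> $ i * (\<Prod>k\<in>UNIV-{i}. m \<epsilon> $ k)"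
      by (rule prod.remove) auto
    also have "(\<Prod>k\<in>UNIV-{i}. m \<epsilon> $ k) = face_area a b i"
      unfolding face_area_def by (rule prod.cong) (auto simp: m_def)
    finally show ?thesis
      by (simp add: m_def)
  qed
  have "eventually (\<lambda>\<epsilon>. 0 < \<epsilon>) (at_right (0::real))"
    by (simp add: eventually_at_right_less)
  then have m_pos: "eventually (\<lambda>\<epsilon>. \<forall>k. 0 < m \<epsilon> $ k) (at_right 0)"
    by eventually_elim (auto simp: m_def ab)
  have "m = (\<lambda>\<epsilon>. m 0 + \<epsilon> *\<^sub>R axis i 1)"
    by (auto simp: m_def vec_eq_iff axis_def)
  moreover have "((\<lambda>\<epsilon>. m 0 + \<epsilon> *\<^sub>R axis i 1) \<longlongrightarrow> m 0 + 0 *\<^sub>R axis i 1) (at_right 0)"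
    by (intro tendsto_intros)
  ultimately have "(m \<longlongrightarrow> m 0) (at_right 0)"
    by simp
  from tendsto_integral_cbox_average[OF cont c this m_pos] show ?thesis
    unfolding vol by (simp add: face_average_def m_def)
qed

lemma tendsto_integral_cbox_shift_coord:
  fixes \<rho> :: "real^'n \<Rightarrow> real"
  assumes cont: "continuous_on UNIV \<rho>" and ab: "\<And>k. a$k < b$k" and "v$i = 0"
  shows "((\<lambda>\<epsilon>. (integral (cbox (a - (p + \<epsilon> *\<^sub>R v + \<epsilon> *\<^sub>R axis i 1)) (b - (p + \<epsilon> *\<^sub>R v + \<epsilon> *\<^sub>R axis i 1))) \<rho>
                 - integral (cbox (a - (p + \<epsilon> *\<^sub>R v)) (b - (p + \<epsilon> *\<^sub>R v))) \<rho>) / \<epsilon>)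
     \<longlongrightarrow> face_area a b i * (face_average \<rho> a b i (a - p)
                              - face_average \<rho> a b i (a - p + (b$i - a$i) *\<^sub>R axis i 1))) (at_right 0)"
proof -
  define m where "m \<epsilon> = (\<chi> k. if k = i then \<epsilon> else b$k - a$k)" for \<epsilon>
  define cL where "cL \<epsilon> = a - (p + \<epsilon> *\<^sub>R v) - \<epsilon> *\<^sub>R axis i 1" for \<epsilon>
  define cU where "cU \<epsilon> = (\<chi> k. if k = i then b$i - (p + \<epsilon> *\<^sub>R v)$i - \<epsilon> else a$k - (p + \<epsilon> *\<^sub>R v)$k)" for \<epsilon>
  let ?avg = "\<lambda>c \<epsilon>. integral (cbox (c \<epsilon>) (c \<epsilon> + m \<epsilon>)) \<rho> / (\<epsilon> * face_area a b i)"
  let ?u = "a - p + (b$i - a$i) *\<^sub>R axis i 1"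
  have "cL = (\<lambda>\<epsilon>. (a - p) - \<epsilon> *\<^sub>R (v + axis i 1))"
    by (auto simp: cL_def algebra_simps)
  moreover have "((\<lambda>\<epsilon>. (a - p) - \<epsilon> *\<^sub>R (v + axis i 1)) \<longlongrightarrow> (a - p) - 0 *\<^sub>R (v + axis i 1)) (at_right 0)"
    by (intro tendsto_intros)
  ultimately have lower: "(?avg cL \<longlongrightarrow> face_average \<rho> a b i (a - p)) (at_right 0)"
    unfolding m_def by (intro tendsto_thin_box_average[OF cont ab]) simp
  have "cU = (\<lambda>\<epsilon>. ?u - \<epsilon> *\<^sub>R (v + axis i 1))"
    using assms(3) by (auto simp: cU_def vec_eq_iff axis_def algebra_simps)
  moreover have "((\<lambda>\<epsilon>. ?u - \<epsilon> *\<^sub>R (v + axis i 1)) \<longlongrightarrow> ?u - 0 *\<^sub>R (v + axis i 1)) (at_right 0)"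
    by (intro tendsto_intros)
  ultimately have upper: "(?avg cU \<longlongrightarrow> face_average \<rho> a b i ?u) (at_right 0)"
    unfolding m_def by (intro tendsto_thin_box_average[OF cont ab]) simp
  from lower upper
  have "((\<lambda>\<epsilon>. face_area a b i * (?avg cL \<epsilon> - ?avg cU \<epsilon>))
      \<longlongrightarrow> face_area a b i * (face_average \<rho> a b i (a - p) - face_average \<rho> a b i ?u)) (at_right 0)"
    by (intro tendsto_intros)
  moreover have "eventually (\<lambda>\<epsilon>. 0 < \<epsilon> \<and> \<epsilon> < b$i - a$i) (at_right 0)"
    using eventually_at_right_real[of 0 "b$i - a$i"] ab[of i] by simp
  then have "eventually (\<lambda>\<epsilon>. face_area a b i * (?avg cL \<epsilon> - ?avg cU \<epsilon>)
      = (integral (cbox (a - (p + \<epsilon> *\<^sub>R v + \<epsilon> *\<^sub>R axis i 1)) (b - (p + \<epsilon> *\<^sub>R v + \<epsilon> *\<^sub>R axis i 1))) \<rho>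
         - integral (cbox (a - (p + \<epsilon> *\<^sub>R v)) (b - (p + \<epsilon> *\<^sub>R v))) \<rho>) / \<epsilon>) (at_right 0)"
  proof eventually_elim
    case (elim \<epsilon>)
    have "integral (cbox (a - (p + \<epsilon> *\<^sub>R v + \<epsilon> *\<^sub>R axis i 1)) (b - (p + \<epsilon> *\<^sub>R v + \<epsilon> *\<^sub>R axis i 1))) \<rho>
        - integral (cbox (a - (p + \<epsilon> *\<^sub>R v)) (b - (p + \<epsilon> *\<^sub>R v))) \<rho>
        = integral (cbox (cL \<epsilon>) (cL \<epsilon> + m \<epsilon>)) \<rho> - integral (cbox (cU \<epsilon>) (cU \<epsilon> + m \<epsilon>)) \<rho>"
      unfolding cL_def cU_def m_def using elim by (intro integral_cbox_shift_coord_diff[OF cont]) auto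
    moreover have "face_area a b i * (A / (\<epsilon> * face_area a b i) - B / (\<epsilon> * face_area a b i)) = (A - B) / \<epsilon>"
      for A B
      using elim face_area_pos[OF ab, of i] by (simp add: field_simps)
    ultimately show ?case
      by simp
  qed
  ultimately show ?thesis
    by (rule Lim_transform_eventually)
qed

lemma tendsto_integral_cbox_shift_coords:
  fixes \<rho> :: "real^'n \<Rightarrow> real"
  assumes cont: "continuous_on UNIV \<rho>" and ab: "\<And>k. a$k < b$k"
  defines "I \<equiv> \<lambda>s. integral (cbox (a - s) (b - s)) \<rho>"
  shows "((\<lambda>\<epsilon>. (I (p + \<epsilon> *\<^sub>R (\<chi> j. if j \<in> S then 1 else 0)) - I p) / \<epsilon>)
     \<longlongrightarrow> (\<Sum>i\<in>S. face_area a b i * (face_average \<rho> a b i (a - p)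
                                   - face_average \<rho> a b i (a - p + (b$i - a$i) *\<^sub>R axis i 1)))) (at_right 0)"
proof (induction S rule: finite_induct[OF finite])
  case (2 i S)
  let ?v = "\<chi> j. if j \<in> S then 1 else (0::real)"
  have "?v $ i = 0"
    using 2(2) by simp
  from tendsto_integral_cbox_shift_coord[OF cont ab this, of p]
  have "((\<lambda>\<epsilon>. (I (p + \<epsilon> *\<^sub>R ?v) - I p) / \<epsilon> + (I (p + \<epsilon> *\<^sub>R ?v + \<epsilon> *\<^sub>R axis i 1) - I (p + \<epsilon> *\<^sub>R ?v)) / \<epsilon>)
      \<longlongrightarrow> (\<Sum>i\<in>S. face_area a b i * (face_average \<rho> a b i (a - p)
                                  - face_average \<rho> a b i (a - p + (b$i - a$i) *\<^sub>R axis i 1)))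
        + face_area a b i * (face_average \<rho> a b i (a - p)
                             - face_average \<rho> a b i (a - p + (b$i - a$i) *\<^sub>R axis i 1))) (at_right 0)"
    unfolding I_def by (intro tendsto_add 2(3)[unfolded I_def])
  moreover have "p + \<epsilon> *\<^sub>R (\<chi> j. if j \<in> insert i S then 1 else 0) = p + \<epsilon> *\<^sub>R ?v + \<epsilon> *\<^sub>R axis i 1" for \<epsilon>
    using 2(2) by (auto simp: vec_eq_iff axis_def)
  then have "(\<lambda>\<epsilon>. (I (p + \<epsilon> *\<^sub>R (\<chi> j. if j \<in> insert i S then 1 else 0)) - I p) / \<epsilon>)
      = (\<lambda>\<epsilon>. (I (p + \<epsilon> *\<^sub>R ?v) - I p) / \<epsilon> + (I (p + \<epsilon> *\<^sub>R ?v + \<epsilon> *\<^sub>R axis i 1) - I (p + \<epsilon> *\<^sub>R ?v)) / \<epsilon>)"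
    by (simp add: diff_divide_distrib add.assoc)
  ultimately show ?case
    unfolding sum.insert[OF 2(1,2)] by (subst add.commute) simp
qed (simp add: zero_vec_def[symmetric])

lemma tendsto_integral_cbox_diagonal_shift:
  fixes \<rho> :: "real^'n \<Rightarrow> real"
  assumes cont: "continuous_on UNIV \<rho>" and ab: "\<And>k. a$k < b$k"
  shows "((\<lambda>\<epsilon>. (integral (cbox (a - vec (t + \<epsilon>)) (b - vec (t + \<epsilon>))) \<rho> - integral (cbox (a - vec t) (b - vec t)) \<rho>) / \<epsilon>)
     \<longlongrightarrow> (\<Sum>i\<in>UNIV. face_area a b i * (face_average \<rho> a b i (a - vec t)
                                   - face_average \<rho> a b i (a - vec t + (b$i - a$i) *\<^sub>R axis i 1)))) (at_right 0)"
proof -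
  have diagonal: "vec t + \<epsilon> *\<^sub>R (\<chi> j. if j \<in> UNIV then 1 else 0) = vec (t + \<epsilon>)" for \<epsilon>
    by (simp add: vec_eq_iff)
  show ?thesis
    using tendsto_integral_cbox_shift_coords[OF cont ab, of "vec t" UNIV] unfolding diagonal .
qed

section \<open>The discretised rotation process\<close>

locale rotated_density =
  fixes q :: nat and \<rho> :: "real^'n \<Rightarrow> real" and \<mu>N :: "(real^'n) measure"
  assumes q_pos: "q > 0"
    and cont: "continuous_on UNIV \<rho>"
    and periodic: "torus_periodic \<rho>"
    and nonneg: "\<And>x. 0 \<le> \<rho> x"
    and \<mu>N_eq: "\<mu>N = density torus_leb (\<lambda>\<omega>. ennreal (\<rho> \<omega>))"
    and prob: "prob_space \<mu>N"
begin

definition rot_cell :: "real \<Rightarrow> ('n \<Rightarrow> nat) \<Rightarrow> (real^'n) set" where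
  "rot_cell t \<sigma> = {\<omega> \<in> torus. Tconf q (rot t \<omega>) = \<sigma>}"

definition cell_prob :: "real \<Rightarrow> ('n \<Rightarrow> nat) \<Rightarrow> real" where
  "cell_prob t \<sigma> = measure \<mu>N (rot_cell t \<sigma>)"

lemma space_\<mu>N: "space \<mu>N = torus"
  by (simp add: \<mu>N_eq torus_leb_def space_restrict_space)

lemma sets_\<mu>N: "sets \<mu>N = sets torus_leb"
  by (simp add: \<mu>N_eq)

lemma rot_cell_sets: "rot_cell t \<sigma> \<in> sets \<mu>N"
proof -
  have "rot_cell t \<sigma> = torus \<inter> {x. Tconf q (rot t x) = \<sigma>}"
    by (auto simp: rot_cell_def)
  also have "\<dots> \<in> sets torus_leb"
    using Tconf_rot_set_borel[OF q_pos, of t \<sigma>] by (auto simp: torus_leb_def sets_restrict_space_iff)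
  finally show ?thesis
    by (simp add: sets_\<mu>N)
qed

lemma cell_prob_eq_integral:
  assumes "\<sigma> \<in> configs q"
  shows "cell_prob t \<sigma> = integral (cbox (cell_lo q \<sigma> - vec t) (cell_hi q \<sigma> - vec t)) \<rho>"
proof -
  have "integral (cbox (cell_lo q \<sigma> - vec t) (cell_hi q \<sigma> - vec t)) \<rho> \<ge> 0"
    by (rule integral_nonneg[OF integrable_continuous[OF continuous_on_subset[OF cont]]]) (auto simp: nonneg)
  moreover have "emeasure \<mu>N (rot_cell t \<sigma>) = ennreal (integral (cbox (cell_lo q \<sigma> - vec t) (cell_hi q \<sigma> - vec t)) \<rho>)"
    unfolding \<mu>N_eq rot_cell_def by (rule emeasure_rotated_cell[OF q_pos assms cont periodic nonneg])
  ultimately show ?thesis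
    by (simp add: cell_prob_def measure_def)
qed

lemma integral_Tconf_rot: "(\<integral>\<omega>. h (Tconf q (rot t \<omega>)) \<partial>\<mu>N) = (\<Sum>\<sigma>\<in>configs q. h \<sigma> * cell_prob t \<sigma>)"
proof -
  have "(\<integral>\<omega>. h (Tconf q (rot t \<omega>)) \<partial>\<mu>N) = (\<integral>\<omega>. (\<Sum>\<sigma>\<in>configs q. h \<sigma> * indicator (rot_cell t \<sigma>) \<omega>) \<partial>\<mu>N)"
  proof (rule Bochner_Integration.integral_cong[OF refl])
    fix \<omega> assume "\<omega> \<in> space \<mu>N"
    then have "(\<Sum>\<sigma>\<in>configs q. h \<sigma> * indicator (rot_cell t \<sigma>) \<omega>)
        = (\<Sum>\<sigma>\<in>configs q. if \<sigma> = Tconf q (rot t \<omega>) then h \<sigma> else 0)"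
      by (intro sum.cong) (auto simp: rot_cell_def space_\<mu>N indicator_def)
    then show "h (Tconf q (rot t \<omega>)) = (\<Sum>\<sigma>\<in>configs q. h \<sigma> * indicator (rot_cell t \<sigma>) \<omega>)"
      by (simp add: finite_configs Tconf_rot_in_configs[OF q_pos])
  qed
  also have "\<dots> = (\<Sum>\<sigma>\<in>configs q. h \<sigma> * cell_prob t \<sigma>)"
  proof -
    have "emeasure \<mu>N (rot_cell t \<sigma>) < \<infinity>" for \<sigma>
      using prob_space.emeasure_le_1[OF prob, of "rot_cell t \<sigma>"] by (simp add: order_le_less_trans)
    moreover have "rot_cell t \<sigma> \<inter> space \<mu>N = rot_cell t \<sigma>" for \<sigma>
      by (auto simp: rot_cell_def space_\<mu>N)
    ultimately show ?thesis
      by (subst Bochner_Integration.integral_sum) (auto simp: cell_prob_def rot_cell_sets)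
  qed
  finally show ?thesis .
qed


text \<open>The mass of \<open>\<rho>\<close> per unit time leaving the rotated cell of \<open>\<sigma>\<close> through its upper face in
  direction \<open>i\<close>.\<close>

definition flux :: "real \<Rightarrow> ('n \<Rightarrow> nat) \<Rightarrow> 'n \<Rightarrow> real" where
  "flux t \<sigma> i = face_area (cell_lo q \<sigma>) (cell_hi q \<sigma>) i
     * face_average \<rho> (cell_lo q \<sigma>) (cell_hi q \<sigma>) i
         (cell_lo q \<sigma> - vec t + (cell_hi q \<sigma> $ i - cell_lo q \<sigma> $ i) *\<^sub>R axis i 1)"

lemma flux_nonneg:
  assumes "\<sigma> \<in> configs q"
  shows "flux t \<sigma> i \<ge> 0"
  unfolding flux_def
  using face_area_pos[OF cell_lo_hi(3)[OF q_pos assms]] face_average_nonneg[OF cont nonneg]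
  by (simp add: less_imp_le)

lemma flux_minus1:
  assumes "\<sigma> \<in> configs q"
  shows "flux t (minus1 q \<sigma> i) i
       = face_area (cell_lo q \<sigma>) (cell_hi q \<sigma>) i * face_average \<rho> (cell_lo q \<sigma>) (cell_hi q \<sigma>) i (cell_lo q \<sigma> - vec t)"
proof -
  let ?\<tau> = "minus1 q \<sigma> i"
  have same: "cell_lo q ?\<tau> $ k = cell_lo q \<sigma> $ k" "cell_hi q ?\<tau> $ k = cell_hi q \<sigma> $ k" if "k \<noteq> i" for k
    using that by (simp_all add: cell_lo_def cell_hi_def minus1_def)
  have area: "face_area (cell_lo q ?\<tau>) (cell_hi q ?\<tau>) i = face_area (cell_lo q \<sigma>) (cell_hi q \<sigma>) i"
    unfolding face_area_def by (rule prod.cong) (auto simp: same)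
  have average: "face_average \<rho> (cell_lo q ?\<tau>) (cell_hi q ?\<tau>) i = face_average \<rho> (cell_lo q \<sigma>) (cell_hi q \<sigma>) i"
    by (simp add: face_average_def same fun_eq_iff cong: if_cong)
  define n :: int where "n = (if \<sigma> i = 1 then 1 else 0)"
  have "1 \<le> \<sigma> i"
    using assms by (simp add: configs_def)
  then have "cell_hi q ?\<tau> $ i = cell_lo q \<sigma> $ i + 2*pi * of_int n"
    using q_pos by (auto simp: cell_lo_def cell_hi_def minus1_def n_def of_nat_diff)
  then have "cell_lo q ?\<tau> - vec t + (cell_hi q ?\<tau> $ i - cell_lo q ?\<tau> $ i) *\<^sub>R axis i 1
      = cell_lo q \<sigma> - vec t + (2*pi * of_int n) *\<^sub>R axis i 1"
    by (auto simp: vec_eq_iff axis_def same)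
  then show ?thesis
    unfolding flux_def area average by (simp only: face_average_periodic[OF periodic])
qed


lemma cell_prob_right_deriv:
  assumes "\<sigma> \<in> configs q"
  shows "((\<lambda>\<epsilon>. (cell_prob (t + \<epsilon>) \<sigma> - cell_prob t \<sigma>) / \<epsilon>)
     \<longlongrightarrow> (\<Sum>i\<in>UNIV. flux t (minus1 q \<sigma> i) i - flux t \<sigma> i)) (at_right 0)"
  using tendsto_integral_cbox_diagonal_shift[OF cont cell_lo_hi(3)[OF q_pos assms], of t]
  by (simp add: cell_prob_eq_integral[OF assms] flux_minus1[OF assms] flux_def[of t \<sigma>] right_diff_distrib)

lemma flux_eq_0:
  assumes "\<sigma> \<in> configs q" "cell_prob t \<sigma> = 0"
  shows "flux t \<sigma> i = 0"
proof -
  let ?a = "cell_lo q \<sigma> - vec t" and ?b = "cell_hi q \<sigma> - vec t"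
  have "face_average \<rho> ?a ?b i (?a + (?b$i - ?a$i) *\<^sub>R axis i 1) = 0"
    using assms cell_lo_hi(3)[OF q_pos assms(1)]
    by (intro face_average_upper_eq_0[OF cont nonneg]) (simp_all add: cell_prob_eq_integral)
  moreover have "face_average \<rho> ?a ?b i = face_average \<rho> (cell_lo q \<sigma>) (cell_hi q \<sigma>) i"
    by (simp add: face_average_def fun_eq_iff cong: if_cong)
  ultimately show ?thesis
    by (simp add: flux_def)
qed

definition rate :: "real \<Rightarrow> ('n \<Rightarrow> nat) \<Rightarrow> 'n \<Rightarrow> real" where
  "rate t \<sigma> i = (if cell_prob t \<sigma> = 0 then 0 else flux t \<sigma> i / cell_prob t \<sigma>)"

lemma rate_nonneg: "rate t \<sigma> i \<ge> 0"
proof (cases "\<sigma> \<in> configs q")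
  case True
  then show ?thesis
    using flux_nonneg[OF True] by (simp add: rate_def cell_prob_def)
next
  case False
  then have "rot_cell t \<sigma> = {}"
    using Tconf_rot_in_configs[OF q_pos] by (auto simp: rot_cell_def)
  then show ?thesis
    by (simp add: rate_def cell_prob_def)
qed

lemma cell_prob_mult_rate: "\<sigma> \<in> configs q \<Longrightarrow> cell_prob t \<sigma> * rate t \<sigma> i = flux t \<sigma> i"
  using flux_eq_0 by (auto simp: rate_def)


lemma sum_configs_generator:
  "(\<Sum>\<sigma>\<in>configs q. cell_prob t \<sigma> * (\<Sum>i\<in>UNIV. rate t \<sigma> i * (g (plus1 q \<sigma> i) - g \<sigma>)))
   = (\<Sum>\<sigma>\<in>configs q. g \<sigma> * (\<Sum>i\<in>UNIV. flux t (minus1 q \<sigma> i) i - flux t \<sigma> i))"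
proof -
  have "(\<Sum>\<sigma>\<in>configs q. cell_prob t \<sigma> * (\<Sum>i\<in>UNIV. rate t \<sigma> i * (g (plus1 q \<sigma> i) - g \<sigma>)))
      = (\<Sum>i\<in>UNIV. \<Sum>\<sigma>\<in>configs q. flux t \<sigma> i * g (plus1 q \<sigma> i))
        - (\<Sum>i\<in>UNIV. \<Sum>\<sigma>\<in>configs q. flux t \<sigma> i * g \<sigma>)"
    by (simp add: sum_distrib_left mult.assoc[symmetric] cell_prob_mult_rate right_diff_distrib
        sum_subtractf sum.swap[of _ "configs q"] cong: sum.cong)
  also have "(\<Sum>i\<in>UNIV. \<Sum>\<sigma>\<in>configs q. flux t \<sigma> i * g (plus1 q \<sigma> i))
      = (\<Sum>i\<in>UNIV. \<Sum>\<sigma>\<in>configs q. flux t (minus1 q \<sigma> i) i * g \<sigma>)"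
    by (intro sum.cong refl sum_configs_plus1[OF q_pos])
  finally show ?thesis
    by (simp add: sum_subtractf[symmetric] sum.swap[of _ UNIV] sum_distrib_left algebra_simps)
qed

lemma tendsto_integral_Tconf_rot:
  "((\<lambda>\<epsilon>. ((\<integral>\<omega>. g (Tconf q (rot (t + \<epsilon>) \<omega>)) \<partial>\<mu>N) - (\<integral>\<omega>. g (Tconf q (rot t \<omega>)) \<partial>\<mu>N)) / \<epsilon>)
     \<longlongrightarrow> (\<Sum>\<sigma>\<in>configs q. cell_prob t \<sigma> * (\<Sum>i\<in>UNIV. rate t \<sigma> i * (g (plus1 q \<sigma> i) - g \<sigma>)))) (at_right 0)"
proof -
  have "((\<lambda>\<epsilon>. \<Sum>\<sigma>\<in>configs q. g \<sigma> * ((cell_prob (t + \<epsilon>) \<sigma> - cell_prob t \<sigma>) / \<epsilon>))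
      \<longlongrightarrow> (\<Sum>\<sigma>\<in>configs q. g \<sigma> * (\<Sum>i\<in>UNIV. flux t (minus1 q \<sigma> i) i - flux t \<sigma> i))) (at_right 0)"
    by (intro tendsto_sum tendsto_mult_left cell_prob_right_deriv)
  then show ?thesis
    unfolding integral_Tconf_rot sum_configs_generator
    by (simp add: sum_subtractf[symmetric] sum_divide_distrib right_diff_distrib)
qed

lemma rot_measurable_\<mu>N: "rot t \<in> measurable \<mu>N \<mu>N"
proof -
  have "rot t \<in> measurable torus_leb torus_leb"
    unfolding torus_leb_def
    by (rule measurable_restrict_space3) (auto simp: rot_in_torus measurable_lborel1)
  then show ?thesis
    by (simp add: measurable_cong_sets[OF sets_\<mu>N sets_\<mu>N])
qed

lemma cell_prob_add: "cell_prob (t + e) \<sigma> = measure (rot_meas t \<mu>N) (rot_cell e \<sigma>)"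
proof -
  have "rot_cell (t + e) \<sigma> = rot t -` rot_cell e \<sigma> \<inter> space \<mu>N"
    by (auto simp: rot_cell_def space_\<mu>N rot_add rot_in_torus)
  then show ?thesis
    by (simp add: cell_prob_def rot_meas_def measure_distr[OF rot_measurable_\<mu>N rot_cell_sets])
qed

lemma tendsto_integral_Tconf_rot_same_measure:
  assumes "rot_meas t \<mu>N = rot_meas s \<mu>N"
  shows "((\<lambda>\<epsilon>. ((\<integral>\<omega>. g (Tconf q (rot (t + \<epsilon>) \<omega>)) \<partial>\<mu>N) - (\<integral>\<omega>. g (Tconf q (rot t \<omega>)) \<partial>\<mu>N)) / \<epsilon>)
     \<longlongrightarrow> (\<Sum>\<sigma>\<in>configs q. cell_prob t \<sigma> * (\<Sum>i\<in>UNIV. rate s \<sigma> i * (g (plus1 q \<sigma> i) - g \<sigma>)))) (at_right 0)"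
proof -
  have same_probs: "cell_prob (t + e) = cell_prob (s + e)" for e
    using assms by (simp add: cell_prob_add fun_eq_iff)
  from same_probs[of 0] have same_now: "cell_prob t = cell_prob s"
    by simp
  show ?thesis
    unfolding integral_Tconf_rot same_probs same_now
    using tendsto_integral_Tconf_rot[of g s] by (simp add: integral_Tconf_rot)
qed

end

lemma rotated_density_if_smooth:
  assumes "q > 0" "smooth_on_torus \<rho>" "\<forall>\<omega>\<in>torus. \<rho> \<omega> \<ge> 0"
    and "\<mu>N = density torus_leb (\<lambda>\<omega>. ennreal (\<rho> \<omega>))" "prob_space \<mu>N"
  shows "rotated_density q \<rho> \<mu>N"
proof -
  have periodic: "torus_periodic \<rho>" and "smooth_fun \<rho>"
    using assms(2) unfolding smooth_on_torus_def torus_periodic_def by blast+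
  then have "has_partials [] \<rho>"
    unfolding smooth_fun_def by blast
  show ?thesis
  proof (rule rotated_density.intro)
    show "continuous_on UNIV \<rho>"
      using \<open>has_partials [] \<rho>\<close> by simp
    show "0 \<le> \<rho> x" for x
      using torus_periodic_nonneg[OF periodic assms(3)] .
  qed (use assms periodic in simp_all)
qed

theorem proposition1p1:
  fixes q :: nat and \<rho> :: "real^'n \<Rightarrow> real" and \<mu>N :: "(real^'n) measure"
  assumes "q \<ge> 2"
    and "smooth_on_torus \<rho>"
    and "\<forall>\<omega>\<in>torus. \<rho> \<omega> \<ge> 0"
    and "\<mu>N = density torus_leb (\<lambda>\<omega>. ennreal (\<rho> \<omega>))"
    and "prob_space \<mu>N"
  shows "\<exists>c :: (real^'n) measure \<Rightarrow> ('n \<Rightarrow> nat) \<Rightarrow> 'n \<Rightarrow> real.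
           (\<forall>\<mu> \<sigma> i. c \<mu> \<sigma> i \<ge> 0) \<and>
           (\<forall>(t::real) (g :: ('n \<Rightarrow> nat) \<Rightarrow> real).
              ((\<lambda>\<epsilon>. ((\<integral>\<omega>. g (Tconf q (rot (t + \<epsilon>) \<omega>)) \<partial>\<mu>N)
                        - (\<integral>\<omega>. g (Tconf q (rot t \<omega>)) \<partial>\<mu>N)) / \<epsilon>)
               \<longlongrightarrow> (\<integral>\<omega>. Qgen q c (rot_meas t \<mu>N) g (Tconf q (rot t \<omega>)) \<partial>\<mu>N))
              (at_right 0))"
proof -
  interpret rotated_density q \<rho> \<mu>N
    using assms by (intro rotated_density_if_smooth) auto
  \<comment> \<open>For measures that are not of the form \<open>R\<^sub>s \<mu>\<^sub>N\<close> the chosen time is arbitrary and harmless.\<close>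
  define c where "c \<mu> = rate (SOME s. \<mu> = rot_meas s \<mu>N)" for \<mu>
  show ?thesis
  proof (intro exI[of _ c] conjI allI)
    fix t :: real and g :: "('n \<Rightarrow> nat) \<Rightarrow> real"
    define s where "s = (SOME s. rot_meas t \<mu>N = rot_meas s \<mu>N)"
    have "rot_meas t \<mu>N = rot_meas s \<mu>N"
      unfolding s_def by (rule someI) (rule refl)
    moreover have "c (rot_meas t \<mu>N) = rate s"
      by (simp add: c_def s_def)
    ultimately show "((\<lambda>\<epsilon>. ((\<integral>\<omega>. g (Tconf q (rot (t + \<epsilon>) \<omega>)) \<partial>\<mu>N) - (\<integral>\<omega>. g (Tconf q (rot t \<omega>)) \<partial>\<mu>N)) / \<epsilon>)
        \<longlongrightarrow> (\<integral>\<omega>. Qgen q c (rot_meas t \<mu>N) g (Tconf q (rot t \<omega>)) \<partial>\<mu>N)) (at_right 0)"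
      using tendsto_integral_Tconf_rot_same_measure[of t s g] unfolding integral_Tconf_rot
      by (simp add: Qgen_def mult.commute)
  qed (simp add: c_def rate_nonneg)
qed

end
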